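(* Let $n\ge 3$, $1<k<n/2$ and $p_{se}:=\frac{nk}{n-2k}<p<p_{so}:=\frac{(n+2)k}{n-2k}$. Then problem (1.6) has no regular solution.
   Context: Here $C_{n-1}^{k-1}$ denotes the binomial coefficient. Problem (1.6) is: given $\rho>0$, find $u$ with $$-\tfrac{1}{k}C_{n-1}^{k-1}\big(r^{n-k}|u'|^{k-1}u'\big)'=r^{n-1}u^{p},\quad u(r)>0 \text{ for all } r>0,\qquad u'(0)=0,\ u(0)=\rho .$$ A solution $u$ of (1.6) is called regular if the function $x\mapsto u(|x|)$ belongs to $C^2(\mathbb{R}^n)$. *)

theory Defs
  imports "HOL-Analysis.Analysis"
begin

definition C2_UNIV :: "('a::euclidean_space \<Rightarrow> real) \<Rightarrow> bool" where
  "C2_UNIV f \<longleftrightarrow> (\<exists>(f' :: 'a \<Rightarrow> ('a \<Rightarrow>\<^sub>L real)) (f'' :: 'a \<Rightarrow> ('a \<Rightarrow>\<^sub>L ('a \<Rightarrow>\<^sub>L real))).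
      (\<forall>x. (f has_derivative blinfun_apply (f' x)) (at x)) \<and>
      (\<forall>x. (f' has_derivative blinfun_apply (f'' x)) (at x)) \<and>
      continuous_on UNIV f'')"

text \<open>u solves problem (1.6) with parameters n, k, p and initial value rho
  (u is considered on [0,\<infinity>); its values at negative arguments are irrelevant).\<close>
definition solves_problem_1_6 :: "nat \<Rightarrow> nat \<Rightarrow> real \<Rightarrow> real \<Rightarrow> (real \<Rightarrow> real) \<Rightarrow> bool" where
  "solves_problem_1_6 n k p \<rho> u \<longleftrightarrow>
     (\<forall>r>0. u r > 0) \<and> u 0 = \<rho> \<and>
     (u has_real_derivative 0) (at 0 within {0..}) \<and>
     (\<forall>r>0. u differentiable (at r)) \<and>
     (\<forall>r>0. \<exists>D. ((\<lambda>s. s ^ (n - k) * \<bar>deriv u s\<bar> ^ (k - 1) * deriv u s) has_real_derivative D) (at r)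
               \<and> - (1 / real k) * real ((n - 1) choose (k - 1)) * D = r ^ (n - 1) * u r powr p)"

text \<open>Regular solution: x \<mapsto> u(|x|) is C^2 on R^n (here R^n = real^'n with CARD('n) = n).\<close>
definition regular_solution_1_6 :: "'n::finite itself \<Rightarrow> nat \<Rightarrow> nat \<Rightarrow> real \<Rightarrow> real \<Rightarrow> (real \<Rightarrow> real) \<Rightarrow> bool" where
  "regular_solution_1_6 _ n k p \<rho> u \<longleftrightarrow>
     solves_problem_1_6 n k p \<rho> u \<and> C2_UNIV (\<lambda>x :: real ^ 'n. u (norm x))"

end

theory Submission
  imports Defs
begin

text \<open>
  Write c = C(n-1,k-1)/k and F = -r^(n-k) |u'|^(k-1) u' for the flux, so that c F' = r^(n-1) u^p > 0.
  Since u'(0) = 0, F is positive and tends to 0 at the origin; hence u decreases and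
  F \<ge> r^n u^p / (n c). The resulting differential inequality for u^(1-p/k) gives the decay
  u = O(r^-\<beta>) with \<beta> = 2k/(p-k), and for p > p_se integrating the equation once more gives
  F = O(r^(n-p\<beta>)) and -u' = O(r^(-\<beta>-1)). The Pohozaev-type function
    P = k c/(k+1) r F (-u') + r^n u^(p+1)/(p+1) - c (n-2k)/(k+1) F u
  satisfies P' = (n/(p+1) - (n-2k)/(k+1)) r^(n-1) u^(p+1), which is positive exactly for p < p_so.
  So P is increasing and nonnegative, while the decay bounds give P = O(r^(n-(p+1)\<beta>)) \<rightarrow> 0
  for p < p_so.
\<close>

lemma DERIV_nonneg_imp_ge_right_limit:
  fixes h :: "real \<Rightarrow> real"
  assumes "0 < r"
    and deriv: "\<And>x. 0 < x \<Longrightarrow> x \<le> r \<Longrightarrow> \<exists>y. (h has_real_derivative y) (at x) \<and> 0 \<le> y"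
    and lim: "(h \<longlongrightarrow> L) (at_right 0)"
  shows "L \<le> h r"
proof (rule tendsto_le[OF _ tendsto_const lim])
  have "h s \<le> h r" if "0 < s" "s < r" for s
    by (rule DERIV_nonneg_imp_nondecreasing) (use that deriv in auto)
  then show "\<forall>\<^sub>F s in at_right 0. h s \<le> h r"
    unfolding eventually_at_right_field using \<open>0 < r\<close> by blast
qed simp

lemma DERIV_nonpos_imp_le_right_limit:
  fixes h :: "real \<Rightarrow> real"
  assumes "0 < r"
    and deriv: "\<And>x. 0 < x \<Longrightarrow> x \<le> r \<Longrightarrow> \<exists>y. (h has_real_derivative y) (at x) \<and> y \<le> 0"
    and lim: "(h \<longlongrightarrow> L) (at_right 0)"
  shows "h r \<le> L"
proof -
  have "- L \<le> - h r"
  proof (rule DERIV_nonneg_imp_ge_right_limit[OF \<open>0 < r\<close>])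
    fix x assume "0 < x" "x \<le> r"
    then obtain y where "(h has_real_derivative y) (at x)" "y \<le> 0" using deriv by blast
    then show "\<exists>y. ((\<lambda>s. - h s) has_real_derivative y) (at x) \<and> 0 \<le> y"
      by (intro exI[of _ "- y"]) (auto intro: DERIV_minus)
  qed (intro tendsto_minus lim)
  then show ?thesis by simp
qed

text \<open>u' is not assumed continuous, so u'(0) = 0 says nothing directly about u' near 0;
  this mean-value argument takes its place.\<close>

lemma zero_right_derivative_slope_bound_absurd:
  fixes f g :: "real \<Rightarrow> real"
  assumes f0: "(f has_real_derivative 0) (at 0 within {0..})" and "0 < r" and "0 < m"
    and slope: "\<And>s. 0 < s \<Longrightarrow> s \<le> r \<Longrightarrow> (f has_real_derivative g s) (at s) \<and> m \<le> g s"
  shows False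
proof -
  have "((\<lambda>s. (f s - f 0) / (s - 0)) \<longlongrightarrow> 0) (at 0 within {0..})"
    using f0 has_field_derivative_iff by blast
  then have "((\<lambda>s. (f s - f 0) / s) \<longlongrightarrow> 0) (at_right 0)"
    by (auto elim: tendsto_within_subset)
  then have "\<forall>\<^sub>F s in at_right 0. (f s - f 0) / s < m \<and> s < r \<and> 0 < s"
    using \<open>0 < m\<close> \<open>0 < r\<close>
    by (intro eventually_conj order_tendstoD(2)) (auto simp: eventually_at_right_field)
  then obtain s where s: "(f s - f 0) / s < m" "s < r" "0 < s"
    using eventually_happens[of _ "at_right (0::real)"] by force
  have "(f \<longlongrightarrow> f 0) (at 0 within {0..})"
    using DERIV_continuous[OF f0] by (simp add: continuous_within)
  then have lim: "((\<lambda>t. f t - m * t) \<longlongrightarrow> f 0 - m * 0) (at_right 0)"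
    by (intro tendsto_intros) (auto elim: tendsto_within_subset)
  have deriv: "\<exists>y. ((\<lambda>t. f t - m * t) has_real_derivative y) (at x) \<and> 0 \<le> y"
    if "0 < x" "x \<le> s" for x
  proof -
    have "(f has_real_derivative g x) (at x)" "m \<le> g x" using slope[of x] that s by auto
    then show ?thesis
      by (intro exI[of _ "g x - m"]) (auto intro: DERIV_diff[where g = "(*) m", simplified])
  qed
  have "f 0 \<le> f s - m * s"
    using DERIV_nonneg_imp_ge_right_limit[OF \<open>0 < s\<close> deriv lim] by simp
  with s show False by (simp add: field_simps)
qed

lemma zero_right_derivative_power_bound_absurd:
  fixes f g :: "real \<Rightarrow> real"
  assumes f0: "(f has_real_derivative 0) (at 0 within {0..})" and "0 < r" "0 < L" "0 < k"
    and bound: "\<And>s. 0 < s \<Longrightarrow> s \<le> r \<Longrightarrow>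
      (f has_real_derivative g s) (at s) \<and> 0 < g s \<and> L \<le> s ^ j * g s ^ k"
  shows False
proof (rule zero_right_derivative_slope_bound_absurd[OF f0 \<open>0 < r\<close>])
  show "0 < min 1 (L / r ^ j)" using \<open>0 < r\<close> \<open>0 < L\<close> by simp
  fix s assume s: "0 < s" "s \<le> r"
  have g: "(f has_real_derivative g s) (at s)" "0 < g s" "L \<le> s ^ j * g s ^ k"
    using bound[OF s] by auto
  have "s ^ j * g s ^ k \<le> r ^ j * g s ^ k"
    using s g by (intro mult_right_mono power_mono) auto
  with g have "L \<le> r ^ j * g s ^ k" by linarith
  with \<open>0 < r\<close> have "L / r ^ j \<le> g s ^ k" by (simp add: field_simps)
  moreover have "g s ^ k \<le> g s" if "g s \<le> 1"
    using power_decreasing[of 1 k "g s"] that g \<open>0 < k\<close> by simp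
  ultimately have "min 1 (L / r ^ j) \<le> g s" by linarith
  with g show "(f has_real_derivative g s) (at s) \<and> min 1 (L / r ^ j) \<le> g s" by simp
qed

definition radial_flux :: "nat \<Rightarrow> nat \<Rightarrow> (real \<Rightarrow> real) \<Rightarrow> real \<Rightarrow> real" where
  "radial_flux n k u s = - (s ^ (n - k) * \<bar>deriv u s\<bar> ^ (k - 1) * deriv u s)"

locale radial_solution =
  fixes n k :: nat and p c :: real and u :: "real \<Rightarrow> real"
  assumes k_pos: "0 < k" and k_less_n: "k < n" and p_pos: "0 < p" and c_pos: "0 < c"
    and u_pos: "\<And>r. 0 < r \<Longrightarrow> 0 < u r"
    and u_right_deriv_0: "(u has_real_derivative 0) (at 0 within {0..})"
    and u_differentiable: "\<And>r. 0 < r \<Longrightarrow> u differentiable (at r)"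
    and flux_has_derivative:
      "\<And>r. 0 < r \<Longrightarrow> (radial_flux n k u has_real_derivative r ^ (n - 1) * u r powr p / c) (at r)"
begin

abbreviation flux :: "real \<Rightarrow> real" where "flux \<equiv> radial_flux n k u"

lemma u_has_derivative: "0 < r \<Longrightarrow> (u has_real_derivative deriv u r) (at r)"
  using u_differentiable DERIV_deriv_iff_real_differentiable by blast

lemma flux_strict_mono: "0 < s \<Longrightarrow> s < r \<Longrightarrow> flux s < flux r"
proof (rule DERIV_pos_imp_increasing[where f = flux])
  fix x assume "0 < s" "s \<le> x"
  then have "0 < x" by simp
  with c_pos u_pos flux_has_derivative
  show "\<exists>y. (flux has_real_derivative y) (at x) \<and> 0 < y" by fastforce
qed

lemma flux_eq_sgn: "flux s = - sgn (deriv u s) * (s ^ (n - k) * \<bar>deriv u s\<bar> ^ k)"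
proof -
  have "\<bar>deriv u s\<bar> ^ (k - 1) * deriv u s = sgn (deriv u s) * \<bar>deriv u s\<bar> ^ k"
    using power_minus_mult[OF k_pos, of "\<bar>deriv u s\<bar>"]
    by (metis mult.left_commute sgn_mult_abs)
  then show ?thesis by (simp add: radial_flux_def mult_ac)
qed

lemma flux_pos: "0 < r \<Longrightarrow> 0 < flux r"
proof (rule ccontr)
  assume r: "0 < r" and "\<not> 0 < flux r"
  define r1 where "r1 = r / 2"
  have r1: "0 < r1" "r1 < r" using r by (auto simp: r1_def)
  have flux_r1: "flux r1 < 0"
    using flux_strict_mono[OF r1] \<open>\<not> 0 < flux r\<close> by simp
  show False
  proof (rule zero_right_derivative_power_bound_absurd[OF u_right_deriv_0 r1(1) _ k_pos])
    show "0 < - flux r1" using flux_r1 by simp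
    fix s assume s: "0 < s" "s \<le> r1"
    have "flux s \<le> flux r1"
      using flux_strict_mono[of s r1] s by (cases "s = r1") auto
    with flux_r1 have "flux s < 0" by simp
    have "0 < deriv u s"
    proof (rule ccontr)
      assume "\<not> 0 < deriv u s"
      then have "0 \<le> - sgn (deriv u s) * (s ^ (n - k) * \<bar>deriv u s\<bar> ^ k)"
        using s by (simp add: mult_nonpos_nonneg)
      with \<open>flux s < 0\<close> show False by (simp add: flux_eq_sgn)
    qed
    with \<open>flux s \<le> flux r1\<close> u_has_derivative[OF s(1)]
    show "(u has_real_derivative deriv u s) (at s) \<and> 0 < deriv u s
          \<and> - flux r1 \<le> s ^ (n - k) * deriv u s ^ k"
      by (simp add: flux_eq_sgn[of s])
  qed
qed

lemma deriv_neg: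
  assumes "0 < r" shows "deriv u r < 0"
proof (rule ccontr)
  assume "\<not> deriv u r < 0"
  then have "- sgn (deriv u r) * (r ^ (n - k) * \<bar>deriv u r\<bar> ^ k) \<le> 0"
    using assms by simp
  with flux_pos[OF assms] show False by (simp add: flux_eq_sgn)
qed

lemma flux_eq: "0 < r \<Longrightarrow> flux r = r ^ (n - k) * (- deriv u r) ^ k"
  using flux_eq_sgn[of r] deriv_neg[of r] by simp

lemma flux_tendsto_0: "(flux \<longlongrightarrow> 0) (at_right 0)"
proof (rule order_tendstoI)
  fix a :: real assume "a < 0"
  then show "\<forall>\<^sub>F s in at_right 0. a < flux s"
    unfolding eventually_at_right_field using flux_pos by (intro exI[of _ 1]) force
next
  fix a :: real assume "0 < a"
  have "\<exists>r0>0. flux r0 < a"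
  proof (rule ccontr)
    assume "\<not> (\<exists>r0>0. flux r0 < a)"
    then have big: "a \<le> flux s" if "0 < s" for s using that by force
    have u'_0: "((\<lambda>s. - u s) has_real_derivative 0) (at 0 within {0..})"
      using DERIV_minus[OF u_right_deriv_0] by simp
    show False
    proof (rule zero_right_derivative_power_bound_absurd[OF u'_0 zero_less_one \<open>0 < a\<close> k_pos])
      fix s :: real assume s: "0 < s" "s \<le> 1"
      show "((\<lambda>s. - u s) has_real_derivative - deriv u s) (at s) \<and> 0 < - deriv u s
            \<and> a \<le> s ^ (n - k) * (- deriv u s) ^ k"
        using DERIV_minus[OF u_has_derivative[OF s(1)]] deriv_neg[OF s(1)] big[OF s(1)]
        by (simp add: flux_eq[OF s(1)])
    qed
  qed
  then obtain r0 where r0: "0 < r0" "flux r0 < a" by blast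
  have "flux s < a" if "0 < s" "s < r0" for s
    using flux_strict_mono[OF that] r0 by simp
  with r0 show "\<forall>\<^sub>F s in at_right 0. flux s < a"
    unfolding eventually_at_right_field by blast
qed

lemma u_antimono:
  assumes "0 < s" "s \<le> r" shows "u r \<le> u s"
proof (rule DERIV_nonpos_imp_nonincreasing[where f = u, OF \<open>s \<le> r\<close>])
  fix x assume "s \<le> x"
  with \<open>0 < s\<close> have "0 < x" by simp
  then show "\<exists>y. (u has_real_derivative y) (at x) \<and> y \<le> 0"
    using u_has_derivative deriv_neg less_imp_le by blast
qed

lemma u_tendsto_u0: "(u \<longlongrightarrow> u 0) (at_right 0)"
  using DERIV_continuous[OF u_right_deriv_0]
  by (auto simp: continuous_within elim: tendsto_within_subset)

lemma u_le_u0: "0 < r \<Longrightarrow> u r \<le> u 0"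
  using DERIV_nonpos_imp_le_right_limit[OF _ _ u_tendsto_u0] u_has_derivative deriv_neg
  by (meson less_imp_le)

lemma flux_lower_bound: "0 < r \<Longrightarrow> r ^ n * u r powr p / (real n * c) \<le> flux r"
proof -
  assume r: "0 < r"
  define K where "K = u r powr p / (real n * c)"
  have "0 - K * 0 ^ n \<le> flux r - K * r ^ n"
  proof (rule DERIV_nonneg_imp_ge_right_limit[OF r])
    fix x assume x: "0 < x" "x \<le> r"
    have "u r powr p \<le> u x powr p"
      using u_antimono[OF x] u_pos[OF r] p_pos by (intro powr_mono2) auto
    then have "K * (real n * x ^ (n - 1)) \<le> x ^ (n - 1) * u x powr p / c"
      using c_pos k_less_n x by (simp add: K_def field_simps)
    moreover have "((\<lambda>s. flux s - K * s ^ n) has_real_derivative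
        x ^ (n - 1) * u x powr p / c - K * (real n * x ^ (n - 1))) (at x)"
      using x by (auto intro!: derivative_eq_intros flux_has_derivative)
    ultimately show "\<exists>y. ((\<lambda>s. flux s - K * s ^ n) has_real_derivative y) (at x) \<and> 0 \<le> y"
      by (intro exI) auto
  qed (intro tendsto_intros flux_tendsto_0)
  moreover have "(0::real) ^ n = 0" using k_less_n by simp
  ultimately show ?thesis by (simp add: K_def mult.commute)
qed

lemma neg_deriv_lower_bound:
  "0 < r \<Longrightarrow> (real n * c) powr (- 1 / real k) * r * u r powr (p / real k) \<le> - deriv u r"
proof -
  assume r: "0 < r"
  define z where "z = (real n * c) powr (- 1 / real k) * r * u r powr (p / real k)"
  have "((real n * c) powr (- 1 / real k)) ^ k = (real n * c) powr (real k * (- 1 / real k))"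
    using k_less_n c_pos by (intro powr_power) simp
  also have "\<dots> = 1 / (real n * c)"
    using k_pos k_less_n c_pos by (simp add: powr_minus_divide)
  finally have "((real n * c) powr (- 1 / real k)) ^ k = 1 / (real n * c)" .
  moreover have "(u r powr (p / real k)) ^ k = u r powr p"
    using k_pos u_pos[OF r] by (simp add: powr_power)
  ultimately have "z ^ k = r ^ k * u r powr p / (real n * c)"
    by (simp add: z_def power_mult_distrib)
  moreover have "r ^ n = r ^ (n - k) * r ^ k"
    using k_less_n by (simp add: power_add[symmetric])
  ultimately have "r ^ (n - k) * z ^ k \<le> r ^ (n - k) * (- deriv u r) ^ k"
    using flux_lower_bound[OF r] flux_eq[OF r] by (simp add: mult_ac)
  then have "z ^ k \<le> (- deriv u r) ^ k" using r by simp
  moreover have "0 \<le> z" by (simp add: z_def r less_imp_le)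
  ultimately show ?thesis
    using deriv_neg[OF r] k_pos by (simp add: z_def)
qed

text \<open>flux_root coincides with -u' but, unlike it, is differentiable, since the flux is.\<close>

definition flux_root :: "real \<Rightarrow> real" where
  "flux_root s = exp ((ln (flux s) - real (n - k) * ln s) / real k)"

lemma flux_root_eq: "0 < r \<Longrightarrow> flux_root r = - deriv u r"
proof -
  assume r: "0 < r"
  have "ln (flux r) = real (n - k) * ln r + real k * ln (- deriv u r)"
    using flux_eq[OF r] deriv_neg[OF r] r by (simp add: ln_mult ln_realpow)
  then have "(ln (flux r) - real (n - k) * ln r) / real k = ln (- deriv u r)"
    using k_pos by simp
  then show ?thesis using deriv_neg[OF r] by (simp add: flux_root_def)
qed

lemma flux_root_has_derivative:
  "0 < r \<Longrightarrow> (flux_root has_real_derivative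
     - deriv u r * ((r ^ (n - 1) * u r powr p / c) / flux r - real (n - k) / r) / real k) (at r)"
proof -
  assume r: "0 < r"
  have "((\<lambda>s. (ln (flux s) - real (n - k) * ln s) / real k) has_real_derivative
      ((r ^ (n - 1) * u r powr p / c) / flux r - real (n - k) / r) / real k) (at r)"
    using r flux_pos[OF r] k_pos
    by (auto intro!: derivative_eq_intros flux_has_derivative simp: field_simps)
  from DERIV_fun_exp[OF this] show ?thesis
    unfolding flux_root_def[abs_def] flux_root_eq[OF r, unfolded flux_root_def] by simp
qed

lemma flux_flux_root_term_has_derivative:
  assumes r: "0 < r"
  shows "((\<lambda>s. real k * c / (real k + 1) * (s * flux s * flux_root s)) has_real_derivative
    r * (r ^ (n - 1) * u r powr p) * - deriv u r
    - c * (real n - 2 * real k) / (real k + 1) * flux r * - deriv u r) (at r)"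
proof -
  define w where "w = - deriv u r"
  define V where "V = r ^ (n - 1) * u r powr p"
  have dF: "(flux has_real_derivative V / c) (at r)"
    using flux_has_derivative[OF r] by (simp add: V_def)
  have dR: "(flux_root has_real_derivative w * (V / c / flux r - real (n - k) / r) / real k) (at r)"
    using flux_root_has_derivative[OF r] by (simp add: V_def w_def)
  have "real k * c * (r * flux r * (w * (V / c / flux r - real (n - k) / r) / real k)
      + (r * (V / c) + 1 * flux r) * w)
      = (real k + 1) * r * V * w - c * (real n - 2 * real k) * flux r * w"
    using r flux_pos[OF r] c_pos k_pos k_less_n by (simp add: field_simps)
  moreover have "real k + 1 \<noteq> 0" by linarith
  ultimately have "real k * c / (real k + 1) * (r * flux r * (w * (V / c / flux r - real (n - k) / r) / real k)
      + (r * (V / c) + 1 * flux r) * flux_root r)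
      = r * V * w - c * (real n - 2 * real k) / (real k + 1) * flux r * w"
    unfolding flux_root_eq[OF r] w_def[symmetric] by (simp add: field_simps)
  moreover have "((\<lambda>s. real k * c / (real k + 1) * (s * flux s * flux_root s)) has_real_derivative
      real k * c / (real k + 1) * (r * flux r * (w * (V / c / flux r - real (n - k) / r) / real k)
        + (r * (V / c) + 1 * flux r) * flux_root r)) (at r)"
    by (intro DERIV_cmult DERIV_mult' DERIV_ident dF dR)
  ultimately show ?thesis by (simp add: V_def w_def)
qed

lemma potential_term_has_derivative:
  assumes r: "0 < r"
  shows "((\<lambda>s. s ^ n * u s powr (p + 1) / (p + 1)) has_real_derivative
    real n / (p + 1) * r ^ (n - 1) * u r powr (p + 1) - r * (r ^ (n - 1) * u r powr p) * - deriv u r) (at r)"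
proof (rule DERIV_cong)
  have "((\<lambda>s. u s powr (p + 1)) has_real_derivative (p + 1) * u r powr p * deriv u r) (at r)"
    using DERIV_fun_powr[OF u_has_derivative[OF r] u_pos[OF r], of "p + 1"] by simp
  then show "((\<lambda>s. s ^ n * u s powr (p + 1) / (p + 1)) has_real_derivative
      (r ^ n * ((p + 1) * u r powr p * deriv u r) + real n * r ^ (n - Suc 0) * u r powr (p + 1))
        / (p + 1)) (at r)"
    by (intro DERIV_cdivide DERIV_mult' DERIV_pow)
  have "r ^ n = r * r ^ (n - 1)" using k_less_n by (cases n) auto
  moreover have "p + 1 \<noteq> 0" using p_pos by simp
  ultimately show "(r ^ n * ((p + 1) * u r powr p * deriv u r) + real n * r ^ (n - Suc 0) * u r powr (p + 1))
        / (p + 1) = real n / (p + 1) * r ^ (n - 1) * u r powr (p + 1) - r * (r ^ (n - 1) * u r powr p) * - deriv u r"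
    by (simp add: field_simps)
qed

lemma flux_u_term_has_derivative:
  assumes r: "0 < r"
  shows "((\<lambda>s. c * (real n - 2 * real k) / (real k + 1) * (flux s * u s)) has_real_derivative
    (real n - 2 * real k) / (real k + 1) * r ^ (n - 1) * u r powr (p + 1)
    - c * (real n - 2 * real k) / (real k + 1) * flux r * - deriv u r) (at r)"
proof (rule DERIV_cong)
  define V where "V = r ^ (n - 1) * u r powr p"
  show "((\<lambda>s. c * (real n - 2 * real k) / (real k + 1) * (flux s * u s)) has_real_derivative
      c * (real n - 2 * real k) / (real k + 1) * (flux r * deriv u r + V / c * u r)) (at r)"
    using flux_has_derivative[OF r]
    by (intro DERIV_cmult DERIV_mult' u_has_derivative r) (simp add: V_def)
  define G where "G = (real n - 2 * real k) / (real k + 1)"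
  have cG: "c * (real n - 2 * real k) / (real k + 1) = c * G" by (simp add: G_def)
  have up: "u r powr (p + 1) = u r * u r powr p" using u_pos[OF r] by (simp add: powr_add)
  from c_pos show "c * (real n - 2 * real k) / (real k + 1) * (flux r * deriv u r + V / c * u r)
      = (real n - 2 * real k) / (real k + 1) * r ^ (n - 1) * u r powr (p + 1)
        - c * (real n - 2 * real k) / (real k + 1) * flux r * - deriv u r"
    unfolding up V_def cG G_def[symmetric] by (simp add: field_simps)
qed

definition pohozaev :: "real \<Rightarrow> real" where
  "pohozaev s = real k * c / (real k + 1) * (s * flux s * flux_root s)
     + s ^ n * u s powr (p + 1) / (p + 1)
     - c * (real n - 2 * real k) / (real k + 1) * (flux s * u s)"

lemma pohozaev_has_derivative:
  assumes r: "0 < r"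
  shows "(pohozaev has_real_derivative
    (real n / (p + 1) - (real n - 2 * real k) / (real k + 1)) * r ^ (n - 1) * u r powr (p + 1)) (at r)"
  using DERIV_diff[OF DERIV_add[OF flux_flux_root_term_has_derivative[OF r]
      potential_term_has_derivative[OF r]] flux_u_term_has_derivative[OF r]]
  unfolding pohozaev_def[abs_def] by (rule DERIV_cong) (simp add: left_diff_distrib)

end

locale supercritical_radial_solution = radial_solution +
  assumes above_Serrin: "real n * real k < p * (real n - 2 * real k)"
begin

lemma two_k_less_n: "2 * real k < real n"
proof -
  have "0 < real n * real k" using k_pos k_less_n by simp
  with above_Serrin have "0 < p * (real n - 2 * real k)" by linarith
  then show ?thesis using p_pos by (simp add: zero_less_mult_iff)
qed

lemma k_less_p: "real k < p"
proof -
  have "real k * (real n - 2 * real k) < real n * real k"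
    using k_pos by (simp add: algebra_simps)
  with above_Serrin have "real k * (real n - 2 * real k) < p * (real n - 2 * real k)" by linarith
  then show ?thesis using two_k_less_n by simp
qed

definition beta :: real where "beta = 2 * real k / (p - real k)"

lemma u_powr_derivative_lower_bound:
  assumes x: "0 < x"
  shows "(p / real k - 1) * (real n * c) powr (- 1 / real k) * x
    \<le> (1 - p / real k) * u x powr (- (p / real k)) * deriv u x"
proof -
  define K where "K = (real n * c) powr (- 1 / real k)"
  have "u x powr (- (p / real k)) * (K * x * u x powr (p / real k))
      = K * x * (u x powr (- (p / real k)) * u x powr (p / real k))"
    by (simp add: ac_simps)
  also have "\<dots> = K * x"
    using u_pos[OF x] by (simp add: powr_add[symmetric])
  finally have "(p / real k - 1) * K * x
      = (p / real k - 1) * (u x powr (- (p / real k)) * (K * x * u x powr (p / real k)))"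
    by simp
  also have "\<dots> \<le> (p / real k - 1) * (u x powr (- (p / real k)) * - deriv u x)"
    using neg_deriv_lower_bound[OF x] k_pos k_less_p
    by (intro mult_left_mono) (auto simp: K_def mult.assoc field_simps)
  also have "\<dots> = (1 - p / real k) * u x powr (- (p / real k)) * deriv u x"
    by (simp add: algebra_simps)
  finally show ?thesis by (simp add: K_def)
qed

lemma u_powr_lower_bound: "\<exists>m>0. \<forall>r>0. m * r\<^sup>2 \<le> u r powr (1 - p / real k)"
proof -
  define a where "a = 1 - p / real k"
  define m where "m = (p / real k - 1) * (real n * c) powr (- 1 / real k) / 2"
  have "0 < m" using k_pos k_less_p k_less_n c_pos by (simp add: m_def field_simps)
  have "m * r\<^sup>2 \<le> u r powr a" if r: "0 < r" for r
  proof -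
    have "u 0 powr a - m * 0\<^sup>2 \<le> u r powr a - m * r\<^sup>2"
    proof (rule DERIV_nonneg_imp_ge_right_limit[OF r])
      fix x assume x: "0 < x" "x \<le> r"
      have "((\<lambda>s. u s powr a - m * s\<^sup>2) has_real_derivative
          a * u x powr (a - 1) * deriv u x - m * (2 * x)) (at x)"
        using u_has_derivative[OF x(1)] u_pos[OF x(1)] by (auto intro!: derivative_eq_intros)
      moreover have "m * (2 * x) \<le> a * u x powr (a - 1) * deriv u x"
        using u_powr_derivative_lower_bound[OF x(1)] by (simp add: a_def m_def)
      ultimately show "\<exists>y. ((\<lambda>s. u s powr a - m * s\<^sup>2) has_real_derivative y) (at x) \<and> 0 \<le> y"
        by (intro exI conjI) auto
    next
      have "0 < u 0" using u_pos[of 1] u_le_u0[of 1] by simp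
      then show "((\<lambda>s. u s powr a - m * s\<^sup>2) \<longlongrightarrow> u 0 powr a - m * 0\<^sup>2) (at_right 0)"
        by (intro tendsto_intros u_tendsto_u0) auto
    qed
    then have "u 0 powr a \<le> u r powr a - m * r\<^sup>2" by simp
    moreover have "0 \<le> u 0 powr a" by simp
    ultimately show ?thesis by linarith
  qed
  with \<open>0 < m\<close> show ?thesis by (auto simp: a_def)
qed

lemma u_decay: "\<exists>C>0. \<forall>r>0. u r \<le> C * r powr (- beta)"
proof -
  define a where "a = 1 - p / real k"
  obtain m where m: "0 < m" "\<And>r. 0 < r \<Longrightarrow> m * r\<^sup>2 \<le> u r powr a"
    using u_powr_lower_bound by (auto simp: a_def)
  have "a < 0" using k_pos k_less_p by (simp add: a_def field_simps)
  have "u r \<le> m powr (1 / a) * r powr (- beta)" if r: "0 < r" for r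
  proof -
    have "u r = (u r powr a) powr (1 / a)"
      using \<open>a < 0\<close> u_pos[OF r] by (simp add: powr_powr)
    also have "\<dots> \<le> (m * r\<^sup>2) powr (1 / a)"
      by (rule powr_mono2'[OF _ _ m(2)[OF r]]) (use \<open>a < 0\<close> m(1) r in auto)
    also have "\<dots> = m powr (1 / a) * r powr (2 * (1 / a))"
    proof -
      have "(r\<^sup>2) powr (1 / a) = r powr (2 * (1 / a))"
        using r by (metis powr_numeral powr_powr less_imp_le)
      with m(1) r show ?thesis by (simp add: powr_mult)
    qed
    also have "2 * (1 / a) = - beta"
      using k_pos k_less_p by (simp add: a_def beta_def field_simps)
    finally show ?thesis .
  qed
  with m show ?thesis by (intro exI[of _ "m powr (1 / a)"]) auto
qed

lemma flux_upper_bound: "\<exists>C>0. \<forall>r>0. flux r \<le> C * r powr (real n - p * beta)"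
proof -
  define g where "g = real n - p * beta"
  obtain C where C: "0 < C" "\<And>r. 0 < r \<Longrightarrow> u r \<le> C * r powr (- beta)"
    using u_decay by auto
  have "0 < g"
    using above_Serrin k_less_p by (simp add: g_def beta_def field_simps)
  define K where "K = C powr p / (c * g)"
  have "flux r \<le> K * r powr g" if r: "0 < r" for r
  proof -
    have "flux r - K * r powr g \<le> 0 - K * 0"
    proof (rule DERIV_nonpos_imp_le_right_limit[OF r])
      fix x assume x: "0 < x" "x \<le> r"
      have "x ^ (n - 1) * u x powr p \<le> x ^ (n - 1) * (C * x powr (- beta)) powr p"
        using C(2)[OF x(1)] u_pos[OF x(1)] p_pos x(1) by (intro mult_left_mono powr_mono2) auto
      also have "\<dots> = C powr p * x powr (g - 1)"
        using C(1) x(1) k_less_n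
        by (simp add: g_def powr_mult powr_powr powr_realpow[symmetric]
            powr_add[symmetric] algebra_simps)
      finally have "x ^ (n - 1) * u x powr p / c - K * (g * x powr (g - 1)) \<le> 0"
        using c_pos \<open>0 < g\<close> by (simp add: K_def field_simps)
      moreover have "((\<lambda>s. flux s - K * s powr g) has_real_derivative
          x ^ (n - 1) * u x powr p / c - K * (g * x powr (g - 1))) (at x)"
        by (intro DERIV_diff flux_has_derivative x DERIV_cmult has_real_derivative_powr)
      ultimately show "\<exists>y. ((\<lambda>s. flux s - K * s powr g) has_real_derivative y) (at x) \<and> y \<le> 0"
        by blast
    next
      have "((\<lambda>s::real. s powr g) \<longlongrightarrow> 0) (at_right 0)"
        using \<open>0 < g\<close>
        by (intro tendsto_zero_powrI) (auto simp: eventually_at_right_field)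
      then show "((\<lambda>s. flux s - K * s powr g) \<longlongrightarrow> 0 - K * 0) (at_right 0)"
        by (intro tendsto_intros flux_tendsto_0)
    qed
    then show ?thesis by simp
  qed
  moreover have "0 < K" using C(1) c_pos \<open>0 < g\<close> by (simp add: K_def)
  ultimately show ?thesis by (auto simp: g_def)
qed

lemma neg_deriv_upper_bound: "\<exists>C>0. \<forall>r>0. - deriv u r \<le> C * r powr (- beta - 1)"
proof -
  obtain K where K: "0 < K" "\<And>r. 0 < r \<Longrightarrow> flux r \<le> K * r powr (real n - p * beta)"
    using flux_upper_bound by auto
  have "- deriv u r \<le> K powr (1 / real k) * r powr (- beta - 1)" if r: "0 < r" for r
  proof -
    define z where "z = K powr (1 / real k) * r powr (- beta - 1)"
    have "z ^ k = K * r powr (real k * (- beta - 1))"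
      using K(1) r k_pos by (simp add: z_def power_mult_distrib powr_power)
    also have "real k * (- beta - 1) = real n - p * beta - real (n - k)"
      using k_less_n k_less_p by (simp add: beta_def field_simps)
    finally have "r ^ (n - k) * z ^ k = K * r powr (real n - p * beta)"
      using r by (simp add: powr_diff powr_realpow)
    then have "r ^ (n - k) * (- deriv u r) ^ k \<le> r ^ (n - k) * z ^ k"
      using K(2)[OF r] flux_eq[OF r] by simp
    then have "(- deriv u r) ^ k \<le> z ^ k" using r by simp
    then show ?thesis
      using deriv_neg[OF r] k_pos by (simp add: z_def)
  qed
  with K(1) show ?thesis by (intro exI[of _ "K powr (1 / real k)"]) auto
qed

lemma flux_flux_root_term_upper_bound:
  "\<exists>C>0. \<forall>r>0. r * flux r * flux_root r \<le> C * r powr (real n - (p + 1) * beta)"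
proof -
  obtain Cf where Cf: "0 < Cf" "\<And>r. 0 < r \<Longrightarrow> flux r \<le> Cf * r powr (real n - p * beta)"
    using flux_upper_bound by auto
  obtain Cd where Cd: "0 < Cd" "\<And>r. 0 < r \<Longrightarrow> - deriv u r \<le> Cd * r powr (- beta - 1)"
    using neg_deriv_upper_bound by auto
  have "r * flux r * flux_root r \<le> Cf * Cd * r powr (real n - (p + 1) * beta)" if r: "0 < r" for r
  proof -
    have "r * flux r * flux_root r = r * flux r * - deriv u r"
      by (simp add: flux_root_eq[OF r])
    also have "\<dots> \<le> r * (Cf * r powr (real n - p * beta)) * (Cd * r powr (- beta - 1))"
      using r flux_pos[OF r] deriv_neg[OF r] Cf Cd(2)[OF r]
      by (intro mult_mono mult_left_mono) auto
    also have "\<dots> = Cf * Cd * (r powr (real n - p * beta) * r powr (- beta - 1) * r powr 1)"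
      using r by (simp add: ac_simps)
    also have "\<dots> = Cf * Cd * r powr ((real n - p * beta) + (- beta - 1) + 1)"
      by (simp only: powr_add)
    finally show ?thesis by (simp add: algebra_simps)
  qed
  with Cf(1) Cd(1) show ?thesis by (intro exI[of _ "Cf * Cd"]) auto
qed

lemma pohozaev_upper_bound: "\<exists>C. \<forall>r>0. pohozaev r \<le> C * r powr (real n - (p + 1) * beta)"
proof -
  obtain Cu where Cu: "0 < Cu" "\<And>r. 0 < r \<Longrightarrow> u r \<le> Cu * r powr (- beta)"
    using u_decay by auto
  obtain Cw where Cw: "\<And>r. 0 < r \<Longrightarrow> r * flux r * flux_root r \<le> Cw * r powr (real n - (p + 1) * beta)"
    using flux_flux_root_term_upper_bound by auto
  define e where "e = real n - (p + 1) * beta"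
  have "pohozaev r \<le> (real k * c / (real k + 1) * Cw + Cu powr (p + 1) / (p + 1)) * r powr e"
    if r: "0 < r" for r
  proof -
    have "u r powr (p + 1) \<le> (Cu * r powr (- beta)) powr (p + 1)"
      using Cu(2)[OF r] u_pos[OF r] p_pos by (intro powr_mono2) auto
    then have "r ^ n * u r powr (p + 1) \<le> r powr real n * (Cu powr (p + 1) * r powr (- beta * (p + 1)))"
      using Cu(1) r by (simp add: powr_mult powr_powr powr_realpow)
    also have "\<dots> = Cu powr (p + 1) * r powr e"
      by (simp add: e_def powr_add[symmetric] algebra_simps)
    finally have potential: "r ^ n * u r powr (p + 1) / (p + 1) \<le> Cu powr (p + 1) / (p + 1) * r powr e"
      using p_pos by (simp add: divide_right_mono)
    have "real k * c / (real k + 1) * (r * flux r * flux_root r)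
        \<le> real k * c / (real k + 1) * (Cw * r powr e)"
      using Cw[OF r] c_pos by (intro mult_left_mono) (simp_all add: e_def)
    moreover have "0 \<le> c * (real n - 2 * real k) / (real k + 1) * (flux r * u r)"
      using c_pos two_k_less_n flux_pos[OF r] u_pos[OF r] by simp
    ultimately show ?thesis
      using potential unfolding pohozaev_def by (simp add: algebra_simps)
  qed
  then show ?thesis by (auto simp: e_def)
qed

end

locale Serrin_Sobolev_radial_solution = supercritical_radial_solution +
  assumes below_Sobolev: "p * (real n - 2 * real k) < (real n + 2) * real k"
begin

lemma pohozaev_strict_mono: "0 < s \<Longrightarrow> s < r \<Longrightarrow> pohozaev s < pohozaev r"
proof (rule DERIV_pos_imp_increasing[where f = pohozaev])
  have "(real n - 2 * real k) * (p + 1) < real n * (real k + 1)"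
    using below_Sobolev by (simp add: algebra_simps)
  then have "(real n - 2 * real k) / (real k + 1) < real n / (p + 1)"
    using p_pos by (simp add: frac_less_eq divide_neg_pos)
  then have delta: "0 < real n / (p + 1) - (real n - 2 * real k) / (real k + 1)"
    by simp
  fix x assume "0 < s" "s \<le> x"
  then have "0 < x" by simp
  with delta u_pos pohozaev_has_derivative
  show "\<exists>y. (pohozaev has_real_derivative y) (at x) \<and> 0 < y" by force
qed

lemma pohozaev_nonneg: "0 < r \<Longrightarrow> 0 \<le> pohozaev r"
proof -
  assume r: "0 < r"
  define G where "G = c * (real n - 2 * real k) / (real k + 1)"
  have lower: "- G * u 0 * flux s \<le> pohozaev s" if s: "0 < s" for s
  proof -
    have "0 \<le> real k * c / (real k + 1) * (s * flux s * flux_root s)"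
      using s c_pos flux_pos[OF s] deriv_neg[OF s]
      by (intro mult_nonneg_nonneg) (auto simp: flux_root_eq)
    moreover have "0 \<le> s ^ n * u s powr (p + 1) / (p + 1)" using s p_pos by simp
    moreover have "G * (flux s * u s) \<le> G * (flux s * u 0)"
      using c_pos two_k_less_n flux_pos[OF s] u_le_u0[OF s]
      by (intro mult_left_mono) (auto simp: G_def)
    ultimately show ?thesis unfolding pohozaev_def G_def by (simp add: algebra_simps)
  qed
  have lim: "((\<lambda>s. - G * u 0 * flux s) \<longlongrightarrow> - G * u 0 * 0) (at_right 0)"
    by (intro tendsto_intros flux_tendsto_0)
  have "- G * u 0 * flux s \<le> pohozaev r" if "0 < s" "s < r" for s
    using lower[OF \<open>0 < s\<close>] pohozaev_strict_mono[OF that] by simp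
  with r have "\<forall>\<^sub>F s in at_right 0. - G * u 0 * flux s \<le> pohozaev r"
    unfolding eventually_at_right_field by blast
  from tendsto_le[OF _ tendsto_const lim this] show ?thesis by simp
qed

lemma pohozaev_tendsto_0: "(pohozaev \<longlongrightarrow> 0) at_top"
proof -
  obtain C where C: "\<And>r. 0 < r \<Longrightarrow> pohozaev r \<le> C * r powr (real n - (p + 1) * beta)"
    using pohozaev_upper_bound by auto
  have "real n - (p + 1) * beta < 0"
    using below_Sobolev k_less_p by (simp add: beta_def field_simps)
  then have "((\<lambda>r. C * r powr (real n - (p + 1) * beta)) \<longlongrightarrow> C * 0) at_top"
    by (intro tendsto_intros tendsto_neg_powr filterlim_ident)
  then have upper_lim: "((\<lambda>r. C * r powr (real n - (p + 1) * beta)) \<longlongrightarrow> 0) at_top"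
    by simp
  have pos: "\<forall>\<^sub>F r in at_top. 0 < (r::real)" by (rule eventually_gt_at_top)
  have "\<forall>\<^sub>F r in at_top. 0 \<le> pohozaev r"
    using pos by eventually_elim (rule pohozaev_nonneg)
  moreover have "\<forall>\<^sub>F r in at_top. pohozaev r \<le> C * r powr (real n - (p + 1) * beta)"
    using pos by eventually_elim (rule C)
  ultimately show ?thesis
    using tendsto_sandwich[OF _ _ tendsto_const upper_lim] by blast
qed

lemma nonexistence: False
proof -
  have "0 < pohozaev 2"
    using pohozaev_nonneg[of 1] pohozaev_strict_mono[of 1 2] by simp
  then have "\<forall>\<^sub>F r in at_top. pohozaev r < pohozaev 2"
    by (rule order_tendstoD(2)[OF pohozaev_tendsto_0])
  moreover have "\<forall>\<^sub>F r in at_top. pohozaev 2 < pohozaev r"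
    using eventually_gt_at_top[of 2] by eventually_elim (rule pohozaev_strict_mono; simp)
  ultimately have "\<forall>\<^sub>F r in at_top. pohozaev r < pohozaev 2 \<and> pohozaev 2 < pohozaev r"
    by (rule eventually_conj)
  from eventually_happens[OF this] show False by auto
qed

end

lemma solves_problem_1_6_imp_radial_solution:
  assumes sol: "solves_problem_1_6 n k p \<rho> u" and "0 < k" "k < n" "0 < p"
  shows "radial_solution n k p (real ((n - 1) choose (k - 1)) / real k) u"
proof
  show "0 < real ((n - 1) choose (k - 1)) / real k"
    using assms(2,3) by simp
  fix r :: real assume "0 < r"
  then obtain D where
    D: "((\<lambda>s. s ^ (n - k) * \<bar>deriv u s\<bar> ^ (k - 1) * deriv u s) has_real_derivative D) (at r)"
      "- (1 / real k) * real ((n - 1) choose (k - 1)) * D = r ^ (n - 1) * u r powr p"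
    using sol by (auto simp: solves_problem_1_6_def)
  have "(radial_flux n k u has_real_derivative - D) (at r)"
    unfolding radial_flux_def[abs_def] using DERIV_minus[OF D(1)] .
  moreover have "- D = r ^ (n - 1) * u r powr p / (real ((n - 1) choose (k - 1)) / real k)"
    using D(2) assms(2,3) by (simp add: field_simps)
  ultimately show "(radial_flux n k u has_real_derivative
      r ^ (n - 1) * u r powr p / (real ((n - 1) choose (k - 1)) / real k)) (at r)"
    by simp
qed (use assms sol in \<open>auto simp: solves_problem_1_6_def\<close>)

theorem theorem1p1:
  fixes n k :: nat and p \<rho> :: real and u :: "real \<Rightarrow> real"
  assumes "CARD('n::finite) = n"
    and "n \<ge> 3" and "1 < k" and "real k < real n / 2"
    and "real n * real k / (real n - 2 * real k) < p"
    and "p < (real n + 2) * real k / (real n - 2 * real k)"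
    and "\<rho> > 0"
  shows "\<not> regular_solution_1_6 TYPE('n) n k p \<rho> u"
proof
  assume "regular_solution_1_6 TYPE('n) n k p \<rho> u"
  then have sol: "solves_problem_1_6 n k p \<rho> u"
    by (simp add: regular_solution_1_6_def)
  have gap: "0 < real n - 2 * real k" using assms(4) by simp
  have above: "real n * real k < p * (real n - 2 * real k)"
    using assms(5) gap by (simp add: field_simps)
  have below: "p * (real n - 2 * real k) < (real n + 2) * real k"
    using assms(6) gap by (simp add: field_simps)
  have "0 < real n * real k" using assms(3) gap by simp
  with above have "0 < p * (real n - 2 * real k)" by linarith
  with gap have "0 < p" by (simp add: zero_less_mult_iff)
  with sol assms(3,4) interpret radial_solution n k p "real ((n - 1) choose (k - 1)) / real k" u
    by (intro solves_problem_1_6_imp_radial_solution) auto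
  interpret Serrin_Sobolev_radial_solution n k p "real ((n - 1) choose (k - 1)) / real k" u
    using above below by unfold_locales
  show False by (rule nonexistence)
qed

end
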